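(* Let $C$ be a linear completely regular $[n,k,2]_q$ code with covering radius $\rho=1$, and let $n_a$ be the number of codewords at distance one from any vector not in $C$. If $k<n-1$, then the set of coordinate positions $\{1,\dots,n\}$ can be partitioned into sets $X_1,\dots,X_{n/n_a}$, each of size $n_a$, such that every codeword of weight $2$ has its support contained in one of these sets.
   Context: Hamming distance; support of a vector = set of its nonzero coordinates; covering radius $\rho=\max_{\bf v}\min_{{\bf x}\in C}d({\bf v},{\bf x})$. $C$ is completely regular if for every vector ${\bf x}$, with $t=d({\bf x},C)$, the number of codewords at distance $i$ from ${\bf x}$ depends only on $t$ and $i$ (so $n_a$ is well defined). *)

theory Defs
  imports Main
begin

text \<open>Vectors of length n over a finite field 'a: functions nat => 'a vanishing
  outside the coordinate positions {0..<n} (positions 1..n of the paper).\<close>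

definition vecs :: "nat \<Rightarrow> (nat \<Rightarrow> 'a::zero) set" where
  "vecs n = {v. \<forall>i. n \<le> i \<longrightarrow> v i = 0}"

definition supp :: "(nat \<Rightarrow> 'a::zero) \<Rightarrow> nat set" where
  "supp v = {i. v i \<noteq> 0}"

definition hdist :: "(nat \<Rightarrow> 'a) \<Rightarrow> (nat \<Rightarrow> 'a) \<Rightarrow> nat" where
  "hdist v w = card {i. v i \<noteq> w i}"

definition weight :: "(nat \<Rightarrow> 'a::zero) \<Rightarrow> nat" where
  "weight v = card (supp v)"

definition linear_code :: "nat \<Rightarrow> nat \<Rightarrow> (nat \<Rightarrow> 'a::{finite,field}) set \<Rightarrow> bool" where
  "linear_code n k C \<longleftrightarrow> C \<subseteq> vecs n \<and> (\<lambda>_. 0) \<in> C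
     \<and> (\<forall>u\<in>C. \<forall>v\<in>C. (\<lambda>i. u i + v i) \<in> C)
     \<and> (\<forall>a. \<forall>v\<in>C. (\<lambda>i. a * v i) \<in> C)
     \<and> card C = card (UNIV :: 'a set) ^ k"

definition min_distance :: "(nat \<Rightarrow> 'a) set \<Rightarrow> nat \<Rightarrow> bool" where
  "min_distance C d \<longleftrightarrow> (\<exists>u\<in>C. \<exists>v\<in>C. u \<noteq> v \<and> hdist u v = d)
     \<and> (\<forall>u\<in>C. \<forall>v\<in>C. u \<noteq> v \<longrightarrow> d \<le> hdist u v)"

definition dist_code :: "(nat \<Rightarrow> 'a) \<Rightarrow> (nat \<Rightarrow> 'a) set \<Rightarrow> nat" where
  "dist_code x C = Min (hdist x ` C)"

definition covering_radius :: "nat \<Rightarrow> (nat \<Rightarrow> 'a::zero) set \<Rightarrow> nat" where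
  "covering_radius n C = Max ((\<lambda>v. dist_code v C) ` vecs n)"

definition completely_regular :: "nat \<Rightarrow> (nat \<Rightarrow> 'a::zero) set \<Rightarrow> bool" where
  "completely_regular n C \<longleftrightarrow>
     (\<forall>x\<in>vecs n. \<forall>y\<in>vecs n. dist_code x C = dist_code y C \<longrightarrow>
        (\<forall>i. card {c\<in>C. hdist x c = i} = card {c\<in>C. hdist y c = i}))"

end

theory Submission
  imports Defs
begin

text \<open>Call two coordinates linked if they are equal or form the support of a weight-2
  codeword. As the minimum distance is 2, a codeword is determined by its entries off any
  single coordinate; and two weight-2 codewords on {i,j} and {j,l} combine linearly to cancel
  coordinate j, giving one on {i,l}, so being linked is an equivalence relation. The codewords
  at distance 1 from the unit vector e_i differ from it in pairwise distinct positions, and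
  these positions are exactly the coordinates linked to i (the zero codeword accounting for i
  itself). Hence every class has n_a elements and the classes form the required partition.\<close>

definition unit_vec :: "nat \<Rightarrow> nat \<Rightarrow> 'a::zero_neq_one" where
  "unit_vec i = (\<lambda>m. if m = i then 1 else 0)"

lemma unit_vec_in_vecs: "i < n \<Longrightarrow> unit_vec i \<in> vecs n"
  by (simp add: unit_vec_def vecs_def)

text \<open>Meaningful only when x and c differ in exactly one position: the_elem of any other
  set is unspecified.\<close>
definition mismatch :: "(nat \<Rightarrow> 'a) \<Rightarrow> (nat \<Rightarrow> 'a) \<Rightarrow> nat" where
  "mismatch x c = the_elem {m. x m \<noteq> c m}"

lemma mismatch_eqI: "{m. x m \<noteq> c m} = {j} \<Longrightarrow> mismatch x c = j"
  by (simp add: mismatch_def)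

lemma hdist_eq_1_iff: "hdist x c = 1 \<longleftrightarrow> {m. x m \<noteq> c m} = {mismatch x c}"
proof
  assume "hdist x c = 1"
  then obtain j where "{m. x m \<noteq> c m} = {j}"
    unfolding hdist_def One_nat_def card_1_singleton_iff ..
  then show "{m. x m \<noteq> c m} = {mismatch x c}"
    by (simp add: mismatch_def)
qed (simp add: hdist_def)

lemma mismatch_iff:
  assumes "hdist x c = 1"
  shows "x m \<noteq> c m \<longleftrightarrow> m = mismatch x c"
  using assms[unfolded hdist_eq_1_iff set_eq_iff, rule_format, of m] by simp

lemma card_quotient_mult:
  assumes "finite A" "equiv A r" "\<forall>X\<in>A // r. card X = m"
  shows "card (A // r) * m = card A"
proof -
  have "m * card (A // r) = card (\<Union>(A // r))"
  proof (rule card_partition)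
    show "finite (A // r)"
      using finite_quotient[OF assms(1) equiv_type[OF assms(2)]] .
    show "finite (\<Union>(A // r))"
      using assms(1) by (simp only: Union_quotient[OF assms(2)])
    show "card X = m" if "X \<in> A // r" for X
      using assms(3) that by blast
    show "X \<inter> Y = {}" if "X \<in> A // r" "Y \<in> A // r" "X \<noteq> Y" for X Y
      using quotient_disj[OF assms(2) that(1,2)] that(3) by blast
  qed
  then show ?thesis
    by (simp add: Union_quotient[OF assms(2)] mult.commute)
qed

lemma supp_eq_doubleton_iff: "supp c = {i, j} \<longleftrightarrow> (\<forall>m. c m \<noteq> 0 \<longleftrightarrow> m = i \<or> m = j)"
  by (auto simp: supp_def)

locale min_dist2_linear_code =
  fixes n k :: nat and C :: "(nat \<Rightarrow> 'a::{finite,field}) set"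
  assumes linear: "linear_code n k C" and min_dist: "min_distance C 2"
begin

lemma code_subset_vecs: "C \<subseteq> vecs n"
  and zero_mem: "(\<lambda>_. 0) \<in> C"
  and add_mem: "u \<in> C \<Longrightarrow> v \<in> C \<Longrightarrow> (\<lambda>i. u i + v i) \<in> C"
  and smult_mem: "v \<in> C \<Longrightarrow> (\<lambda>i. a * v i) \<in> C"
  using linear by (auto simp: linear_code_def)

lemma supp_subset:
  assumes "c \<in> C"
  shows "supp c \<subseteq> {0..<n}"
proof
  fix m assume "m \<in> supp c"
  moreover have "c m = 0" if "n \<le> m"
    using assms code_subset_vecs that by (auto simp: vecs_def)
  ultimately show "m \<in> {0..<n}"
    by (simp add: supp_def) (meson not_less)
qed

lemma eq_if_differ_only_at:
  assumes "u \<in> C" "v \<in> C" "{m. u m \<noteq> v m} \<subseteq> {j}"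
  shows "u = v"
proof (rule ccontr)
  assume "u \<noteq> v"
  then have "2 \<le> hdist u v"
    using min_dist assms(1,2) by (auto simp: min_distance_def)
  moreover have "hdist u v \<le> 1"
    using card_mono[OF _ assms(3)] by (simp add: hdist_def)
  ultimately show False by simp
qed

lemma eq_zero_if_supp_subset_singleton:
  assumes "c \<in> C" "supp c \<subseteq> {j}"
  shows "c = (\<lambda>_. 0)"
  using eq_if_differ_only_at[OF assms(1) zero_mem, of j] assms(2) by (simp add: supp_def)

lemma weight2_combine:
  assumes c: "c \<in> C" "supp c = {i, j}" and d: "d \<in> C" "supp d = {j, l}"
    and distinct: "i \<noteq> j" "j \<noteq> l" "i \<noteq> l"
  shows "\<exists>e\<in>C. supp e = {i, l}"
proof
  define t where "t = - (c j / d j)"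
  have cs: "c m \<noteq> 0 \<longleftrightarrow> m = i \<or> m = j" and ds: "d m \<noteq> 0 \<longleftrightarrow> m = j \<or> m = l" for m
    using c(2) d(2) by (auto simp: supp_eq_doubleton_iff)
  then have "t \<noteq> 0"
    by (simp add: t_def)
  have "c m + t * d m \<noteq> 0 \<longleftrightarrow> m = i \<or> m = l" for m
  proof -
    consider "m = i" | "m = j" | "m = l" | "m \<notin> {i, j, l}"
      by blast
    then show ?thesis
    proof cases
      case 1
      then show ?thesis using cs[of i] ds[of i] distinct by simp
    next
      case 2
      then show ?thesis using ds[of j] distinct by (simp add: t_def)
    next
      case 3
      then show ?thesis using cs[of l] ds[of l] distinct \<open>t \<noteq> 0\<close> by simp
    next
      case 4
      then show ?thesis using cs[of m] ds[of m] by simp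
    qed
  qed
  then show "supp (\<lambda>m. c m + t * d m) = {i, l}"
    by (simp add: supp_eq_doubleton_iff)
  show "(\<lambda>m. c m + t * d m) \<in> C"
    using add_mem[OF c(1) smult_mem[OF d(1)]] .
qed

definition linked :: "(nat \<times> nat) set" where
  "linked = {(i, j). i < n \<and> j < n \<and> (i = j \<or> (\<exists>c\<in>C. supp c = {i, j}))}"

lemma equiv_linked: "equiv {0..<n} linked"
proof (rule equivI)
  show "linked \<subseteq> {0..<n} \<times> {0..<n}"
    by (auto simp: linked_def)
  show "refl_on {0..<n} linked"
    by (rule refl_onI) (auto simp: linked_def)
  show "sym linked"
  proof (rule symI)
    fix i j assume "(i, j) \<in> linked"
    then show "(j, i) \<in> linked"
      by (auto simp: linked_def insert_commute)
  qed
  show "trans linked"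
  proof (rule transI)
    fix i j l assume ij: "(i, j) \<in> linked" and jl: "(j, l) \<in> linked"
    show "(i, l) \<in> linked"
    proof (cases "i = j \<or> j = l \<or> i = l")
      case True
      with ij jl show ?thesis by (auto simp: linked_def)
    next
      case False
      with ij jl obtain c d where c: "c \<in> C" "supp c = {i, j}" and d: "d \<in> C" "supp d = {j, l}"
        by (auto simp: linked_def)
      from weight2_combine[OF c d] False have "\<exists>e\<in>C. supp e = {i, l}"
        by blast
      with ij jl show ?thesis
        by (simp add: linked_def)
    qed
  qed
qed

lemma linked_if_differs_from_unit_vec_only_at:
  assumes "i < n" "c \<in> C" and differ: "{m. unit_vec i m \<noteq> c m} = {j}"
  shows "(i, j) \<in> linked"
proof (cases "j = i")
  case False
  have "c m \<noteq> 0 \<longleftrightarrow> m = i \<or> m = j" for m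
    using differ[unfolded set_eq_iff, rule_format, of m] False
    by (cases "m = j") (auto simp: unit_vec_def split: if_splits)
  then have "supp c = {i, j}"
    by (simp add: supp_eq_doubleton_iff)
  with assms(2) show ?thesis
    using supp_subset[OF assms(2)] by (auto simp: linked_def)
qed (use assms(1) in \<open>simp add: linked_def\<close>)

lemma differs_from_unit_vec_only_at_if_linked:
  assumes "(i, j) \<in> linked"
  shows "\<exists>c\<in>C. {m. unit_vec i m \<noteq> c m} = {j}"
proof (cases "j = i")
  case True
  then show ?thesis
    by (intro bexI[OF _ zero_mem]) (auto simp: unit_vec_def)
next
  case False
  with assms obtain c where "c \<in> C" "supp c = {i, j}"
    by (auto simp: linked_def)
  then have cs: "c m \<noteq> 0 \<longleftrightarrow> m = i \<or> m = j" for m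
    by (simp add: supp_eq_doubleton_iff)
  define c' where "c' = (\<lambda>m. inverse (c i) * c m)"
  have "c' \<in> C"
    unfolding c'_def using smult_mem[OF \<open>c \<in> C\<close>] .
  moreover have "unit_vec i m \<noteq> c' m \<longleftrightarrow> m = j" for m
  proof (cases "m = i")
    case True
    with cs[of i] show ?thesis
      using False by (simp add: unit_vec_def c'_def)
  next
    case False
    with cs[of i] cs[of m] show ?thesis
      by (simp add: unit_vec_def c'_def)
  qed
  then have "{m. unit_vec i m \<noteq> c' m} = {j}"
    by blast
  ultimately show ?thesis
    by blast
qed

lemma unit_vec_notin_code: "(unit_vec i :: nat \<Rightarrow> 'a) \<notin> C"
proof
  assume "unit_vec i \<in> C"
  moreover have "supp (unit_vec i :: nat \<Rightarrow> 'a) \<subseteq> {i}"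
    by (simp add: supp_def unit_vec_def)
  ultimately have "unit_vec i = (\<lambda>_. 0 :: 'a)"
    by (rule eq_zero_if_supp_subset_singleton)
  then show False
    by (metis unit_vec_def zero_neq_one)
qed

lemma inj_on_mismatch: "inj_on (mismatch x) {c\<in>C. hdist x c = 1}"
proof (rule inj_onI)
  fix c d assume c: "c \<in> {c\<in>C. hdist x c = 1}" and d: "d \<in> {c\<in>C. hdist x c = 1}"
    and same: "mismatch x c = mismatch x d"
  have "m = mismatch x c" if "c m \<noteq> d m" for m
    using that same mismatch_iff[of x c m] mismatch_iff[of x d m] c d by auto
  then have "{m. c m \<noteq> d m} \<subseteq> {mismatch x c}"
    by blast
  with c d show "c = d"
    by (intro eq_if_differ_only_at) auto
qed

lemma mismatch_unit_vec_image:
  assumes "i < n"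
  shows "mismatch (unit_vec i) ` {c\<in>C. hdist (unit_vec i) c = 1} = linked `` {i}"
proof
  show "mismatch (unit_vec i) ` {c\<in>C. hdist (unit_vec i) c = 1} \<subseteq> linked `` {i}"
  proof
    fix j assume "j \<in> mismatch (unit_vec i) ` {c\<in>C. hdist (unit_vec i) c = 1}"
    then obtain c where "c \<in> C" "{m. unit_vec i m \<noteq> c m} = {j}"
      unfolding hdist_eq_1_iff by auto
    then show "j \<in> linked `` {i}"
      using linked_if_differs_from_unit_vec_only_at[OF assms] by simp
  qed
  show "linked `` {i} \<subseteq> mismatch (unit_vec i) ` {c\<in>C. hdist (unit_vec i) c = 1}"
  proof
    fix j assume "j \<in> linked `` {i}"
    then obtain c where "c \<in> C" and c: "{m. unit_vec i m \<noteq> c m} = {j}"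
      using differs_from_unit_vec_only_at_if_linked by blast
    then have "c \<in> {c\<in>C. hdist (unit_vec i) c = 1}"
      by (simp add: hdist_def)
    moreover have "mismatch (unit_vec i) c = j"
      using c by (rule mismatch_eqI)
    ultimately show "j \<in> mismatch (unit_vec i) ` {c\<in>C. hdist (unit_vec i) c = 1}"
      by blast
  qed
qed

lemma card_linked_class:
  assumes "i < n"
  shows "card (linked `` {i}) = card {c\<in>C. hdist (unit_vec i) c = 1}"
proof -
  have "card (linked `` {i}) = card (mismatch (unit_vec i) ` {c\<in>C. hdist (unit_vec i) c = 1})"
    by (simp only: mismatch_unit_vec_image[OF assms])
  also have "\<dots> = card {c\<in>C. hdist (unit_vec i) c = 1}"
    by (rule card_image[OF inj_on_mismatch])
  finally show ?thesis .
qed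

lemma weight2_supp_subset_class:
  assumes "c \<in> C" "weight c = 2"
  shows "\<exists>X\<in>{0..<n} // linked. supp c \<subseteq> X"
proof -
  from assms(2) obtain a b where ab: "supp c = {a, b}"
    by (auto simp: weight_def card_2_iff)
  with assms(1) have "(a, b) \<in> linked"
    using supp_subset[OF assms(1)] by (auto simp: linked_def)
  then have "supp c \<subseteq> linked `` {a}" and "a < n"
    using ab by (auto simp: linked_def)
  then show ?thesis
    using quotientI[of a "{0..<n}" linked] by auto
qed

end

theorem lemma3p6:
  fixes C :: "(nat \<Rightarrow> 'a::{finite,field}) set" and n k na :: nat
  assumes "linear_code n k C"
    and "min_distance C 2"
    and "completely_regular n C"
    and "covering_radius n C = 1"
    and "\<forall>x\<in>vecs n. x \<notin> C \<longrightarrow> card {c\<in>C. hdist x c = 1} = na"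
    and "k < n - 1"
  shows "\<exists>P. P \<subseteq> Pow {0..<n} \<and> \<Union>P = {0..<n}
           \<and> (\<forall>X\<in>P. \<forall>Y\<in>P. X \<noteq> Y \<longrightarrow> X \<inter> Y = {})
           \<and> (\<forall>X\<in>P. card X = na)
           \<and> card P * na = n
           \<and> (\<forall>c\<in>C. weight c = 2 \<longrightarrow> (\<exists>X\<in>P. supp c \<subseteq> X))"
proof -
  interpret min_dist2_linear_code n k C
    using assms(1,2) by unfold_locales
  let ?P = "{0..<n} // linked"
  have card_class: "\<forall>X\<in>?P. card X = na"
  proof
    fix X assume "X \<in> ?P"
    then obtain i where "i < n" "X = linked `` {i}"
      by (auto elim: quotientE)
    with assms(5) show "card X = na"
      by (simp add: card_linked_class unit_vec_in_vecs unit_vec_notin_code)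
  qed
  have "?P \<subseteq> Pow {0..<n}"
    using in_quotient_imp_subset[OF equiv_linked] by blast
  moreover have "\<Union>?P = {0..<n}"
    by (rule Union_quotient[OF equiv_linked])
  moreover have "\<forall>X\<in>?P. \<forall>Y\<in>?P. X \<noteq> Y \<longrightarrow> X \<inter> Y = {}"
    using quotient_disj[OF equiv_linked] by blast
  moreover have "card ?P * na = n"
    using card_quotient_mult[OF _ equiv_linked card_class] by simp
  ultimately show ?thesis
    using card_class weight2_supp_subset_class by (intro exI[of _ ?P]) simp
qed

end
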